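(* Let $\mu,\nu\in\mathbb{R}$, let $U_\sigma=U_\sigma(so_{\mu,\nu}(2,2))$ with coproduct $\Delta$ be as in the context, and define $$\mathcal P=\frac{e^{\sigma P}-1}{\sigma},\quad \mathcal H=H,\quad \mathcal K=K,\quad \mathcal D=D,\quad \mathcal C_1=C_1,\quad \mathcal C_2=C_2+\sigma\mu D^2.$$ Then these elements satisfy the undeformed relations $[\mathcal K,\mathcal H]=\nu\mathcal P$, $[\mathcal K,\mathcal P]=\mu\mathcal H$, $[\mathcal H,\mathcal P]=0$, $[\mathcal D,\mathcal H]=\mathcal H$, $[\mathcal D,\mathcal C_1]=-\mathcal C_1$, $[\mathcal H,\mathcal C_1]=-2\nu\mathcal D$, $[\mathcal D,\mathcal P]=\mathcal P$, $[\mathcal D,\mathcal C_2]=-\mathcal C_2$, $[\mathcal P,\mathcal C_2]=2\mu\mathcal D$, $[\mathcal K,\mathcal C_1]=\nu\mathcal C_2$, $[\mathcal K,\mathcal C_2]=\mu\mathcal C_1$, $[\mathcal K,\mathcal D]=0$, $[\mathcal H,\mathcal C_2]=2\mathcal K$, $[\mathcal P,\mathcal C_1]=-2\mathcal K$, $[\mathcal C_1,\mathcal C_2]=0$, and their coproducts are $$\Delta(\mathcal P)=1\otimes\mathcal P+\mathcal P\otimes 1+\sigma\mathcal P\otimes\mathcal P,\qquad \Delta(\mathcal H)=1\otimes\mathcal H+\mathcal H\otimes 1+\sigma\mathcal H\otimes\mathcal P,$$ $$\Delta(\mathcal D)=1\otimes\mathcal D+\mathcal D\otimes\frac{1}{1+\sigma\mathcal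 P},\qquad \Delta(\mathcal K)=1\otimes\mathcal K+\mathcal K\otimes 1-\sigma\mu\,\mathcal D\otimes\frac{\mathcal H}{1+\sigma\mathcal P},$$ $$\Delta(\mathcal C_1)=1\otimes\mathcal C_1+\mathcal C_1\otimes\frac{1}{1+\sigma\mathcal P}-2\sigma\,\mathcal D\otimes\frac{1}{1+\sigma\mathcal P}\mathcal K+\sigma^2\mu(\mathcal D^2+\mathcal D)\otimes\frac{\mathcal H}{(1+\sigma\mathcal P)^2},$$ $$\Delta(\mathcal C_2)=1\otimes\mathcal C_2+\mathcal C_2\otimes\frac{1}{1+\sigma\mathcal P}+2\sigma\mu\,\mathcal D\otimes\frac{1}{1+\sigma\mathcal P}\mathcal D-\sigma\mu(\mathcal D^2+\mathcal D)\otimes\frac{\sigma\mathcal P}{(1+\sigma\mathcal P)^2}.$$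
   Context: $U_\sigma(so_{\mu,\nu}(2,2))$ denotes the $\sigma$-adically completed associative algebra over $\mathbb{R}[[\sigma]]$ generated by $H,P,K,D,C_1,C_2$ subject to the relations $[K,H]=\nu\frac{e^{\sigma P}-1}{\sigma}$, $[K,P]=\mu e^{-\sigma P}H$, $[H,P]=0$, $[K,D]=0$, $[D,H]=H$, $[D,C_1]=-C_1$, $[H,C_1]=-2\nu D$, $[D,P]=\frac{1-e^{-\sigma P}}{\sigma}$, $[D,C_2]=-C_2-\sigma\mu D^2$, $[P,C_2]=2\mu D$, $[K,C_1]=\nu C_2+\sigma\mu\nu D^2$, $[K,C_2]=\mu C_1$, $[P,C_1]=-e^{-\sigma P}K-Ke^{-\sigma P}$, $[H,C_2]=2K+\sigma\mu(DH+HD)$, $[C_1,C_2]=-\sigma\mu(DC_1+C_1D)$. Its coproduct $\Delta$ is the algebra homomorphism determined by $\Delta(P)=1\otimes P+P\otimes 1$, $\Delta(D)=1\otimes D+D\otimes e^{-\sigma P}$, $\Delta(H)=1\otimes H+H\otimes e^{\sigma P}$, $\Delta(C_2)=1\otimes C_2+C_2\otimes e^{-\sigma P}$, $\Delta(K)=1\otimes K+K\otimes 1-\sigma\mu D\otimes e^{-\sigma P}H$, $\Delta(C_1)=1\otimes C_1+C_1\otimes e^{-\sigma P}-2\sigma D\otimes e^{-\sigma P}K+\sigma^2\mu(D^2+D)\otimes e^{-2\sigma P}H$. Note $1+\sigma\mathcal P=e^{\sigma P}$ is invertible. *)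

theory Defs
  imports Complex_Main
begin

definition comm :: "'a::ring \<Rightarrow> 'a \<Rightarrow> 'a" where
  "comm x y = x * y - y * x"

text \<open>s-adic topology on a ring with a distinguished central element s
  (the formal parameter sigma).  The ideal s^k A is two-sided because s is central.\<close>
definition sadic_lim :: "'a::ring_1 \<Rightarrow> (nat \<Rightarrow> 'a) \<Rightarrow> 'a \<Rightarrow> bool" where
  "sadic_lim s f L \<longleftrightarrow> (\<forall>k. \<exists>N. \<forall>n\<ge>N. \<exists>y. f n - L = s ^ k * y)"

definition sadic_cauchy :: "'a::ring_1 \<Rightarrow> (nat \<Rightarrow> 'a) \<Rightarrow> bool" where
  "sadic_cauchy s f \<longleftrightarrow> (\<forall>k. \<exists>N. \<forall>m\<ge>N. \<forall>n\<ge>N. \<exists>y. f m - f n = s ^ k * y)"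

definition sadic_separated :: "'a::ring_1 \<Rightarrow> bool" where
  "sadic_separated s \<longleftrightarrow> (\<forall>x. (\<forall>k. \<exists>y. x = s ^ k * y) \<longrightarrow> x = 0)"

definition sadic_complete :: "'a::ring_1 \<Rightarrow> bool" where
  "sadic_complete s \<longleftrightarrow> (\<forall>x. s * x = x * s) \<and> sadic_separated s \<and>
     (\<forall>f. sadic_cauchy s f \<longrightarrow> (\<exists>L. sadic_lim s f L))"

definition sadic_Lim :: "'a::ring_1 \<Rightarrow> (nat \<Rightarrow> 'a) \<Rightarrow> 'a" where
  "sadic_Lim s f = (THE L. sadic_lim s f L)"

definition sexp :: "'a::real_algebra_1 \<Rightarrow> 'a \<Rightarrow> 'a" where
  "sexp s X = sadic_Lim s (\<lambda>N. \<Sum>n<N. (1 / fact n) *\<^sub>R (s ^ n * X ^ n))"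

text \<open>sexpm1_div s X = (e^(s X) - 1)/s = sum_n s^n X^(n+1) / (n+1)!  (s-adic limit).\<close>
definition sexpm1_div :: "'a::real_algebra_1 \<Rightarrow> 'a \<Rightarrow> 'a" where
  "sexpm1_div s X = sadic_Lim s (\<lambda>N. \<Sum>n<N. (1 / fact (Suc n)) *\<^sub>R (s ^ n * X ^ Suc n))"

definition ring_inv :: "'a::ring_1 \<Rightarrow> 'a" where
  "ring_inv x = (THE y. x * y = 1 \<and> y * x = 1)"

end

theory Submission
  imports Defs
begin

(*
  The key fact is a commutator formula valid in any s-adically complete algebra: if [c, x] = d,
  [d, x] = e and [x, e] = 0, then
    [c, (e^(s x) - 1)/s] = e^(s x) d + (s/2) e^(s x) e,
  obtained by summing the nested commutators [c, x^(n+1)] term by term.  Taking x = P turns every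
  deformed relation involving P into its undeformed form, the factors e^(s P) and e^(-s P)
  cancelling.  On the coproduct side, Delta, x \<mapsto> x \<otimes> 1 and x \<mapsto> 1 \<otimes> x commute with the
  exponential series; the addition formula for (e^(s x) - 1)/s along the commuting elements
  P \<otimes> 1 and 1 \<otimes> P yields the coproduct of the new P, 1 + s calP = e^(s P) is inverted by
  e^(-s P), and the coproduct of the new C2 rests on [D, e^(-s P)] = e^(-2 s P) - e^(-s P).
*)

section \<open>s-adic convergence\<close>

definition spow_dvd :: "'a::ring_1 \<Rightarrow> nat \<Rightarrow> 'a \<Rightarrow> bool" where
  "spow_dvd s k z \<longleftrightarrow> (\<exists>y. z = s ^ k * y)"

lemma spow_dvd_0 [simp]: "spow_dvd s k 0"
  unfolding spow_dvd_def by (rule exI[of _ 0]) simp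

lemma spow_dvd_power_mult [simp]: "k \<le> m \<Longrightarrow> spow_dvd s k (s ^ m * y)"
  unfolding spow_dvd_def by (metis le_add_diff_inverse mult.assoc power_add)

lemma spow_dvd_mono: "k \<le> m \<Longrightarrow> spow_dvd s m x \<Longrightarrow> spow_dvd s k x"
  using spow_dvd_power_mult unfolding spow_dvd_def by blast

lemma spow_dvd_add: "spow_dvd s k x \<Longrightarrow> spow_dvd s k y \<Longrightarrow> spow_dvd s k (x + y)"
  unfolding spow_dvd_def by (metis distrib_left)

lemma spow_dvd_diff: "spow_dvd s k x \<Longrightarrow> spow_dvd s k y \<Longrightarrow> spow_dvd s k (x - y)"
  unfolding spow_dvd_def by (metis right_diff_distrib)

lemma spow_dvd_mult_right: "spow_dvd s k x \<Longrightarrow> spow_dvd s k (x * w)"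
  unfolding spow_dvd_def by (metis mult.assoc)

lemma spow_dvd_scaleR: "spow_dvd s k (x::'a::real_algebra_1) \<Longrightarrow> spow_dvd s k (r *\<^sub>R x)"
  unfolding spow_dvd_def by (metis mult_scaleR_right)

lemma spow_dvd_sum: "(\<And>i. i \<in> A \<Longrightarrow> spow_dvd s k (f i)) \<Longrightarrow> spow_dvd s k (sum f A)"
  by (induction A rule: infinite_finite_induct) (simp_all add: spow_dvd_add)

lemma sadic_complete_central: "sadic_complete s \<Longrightarrow> s * x = x * s"
  unfolding sadic_complete_def by blast

lemma sadic_complete_power_central: "sadic_complete s \<Longrightarrow> s ^ n * x = x * s ^ n"
  by (metis power_commuting_commutes sadic_complete_central)

lemma power_mult_power_mult:
  assumes "sadic_complete s"
  shows "(s ^ i * y) * (s ^ j * z) = s ^ (i + j) * (y * z)"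
proof -
  have "(s ^ i * y) * (s ^ j * z) = s ^ i * ((y * s ^ j) * z)" by (simp only: mult.assoc)
  also have "y * s ^ j = s ^ j * y" by (rule sadic_complete_power_central[OF assms, symmetric])
  finally show ?thesis by (simp only: mult.assoc power_add)
qed

lemma spow_dvd_mult_left:
  assumes "sadic_complete s" and "spow_dvd s k x"
  shows "spow_dvd s k (w * x)"
proof -
  obtain y where "x = s ^ k * y" using assms(2) unfolding spow_dvd_def by blast
  moreover have "w * s ^ k = s ^ k * w"
    by (rule sadic_complete_power_central[OF assms(1), symmetric])
  ultimately have "w * x = s ^ k * (w * y)" by (metis mult.assoc)
  then show ?thesis unfolding spow_dvd_def by blast
qed

lemma sadic_lim_iff: "sadic_lim s f L \<longleftrightarrow> (\<forall>k. \<exists>N. \<forall>n\<ge>N. spow_dvd s k (f n - L))"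
  unfolding sadic_lim_def spow_dvd_def by blast

lemma sadic_complete_separated: "sadic_complete s \<Longrightarrow> sadic_separated s"
  unfolding sadic_complete_def by blast

lemma sadic_lim_unique:
  assumes "sadic_separated s" and "sadic_lim s f L" and "sadic_lim s f M"
  shows "L = M"
proof -
  have "spow_dvd s k (L - M)" for k
  proof -
    obtain N1 where "\<forall>n\<ge>N1. spow_dvd s k (f n - L)"
      using assms(2) unfolding sadic_lim_iff by blast
    moreover obtain N2 where "\<forall>n\<ge>N2. spow_dvd s k (f n - M)"
      using assms(3) unfolding sadic_lim_iff by blast
    ultimately have "spow_dvd s k ((f (max N1 N2) - M) - (f (max N1 N2) - L))"
      by (intro spow_dvd_diff[of s k "f (max N1 N2) - M"]) auto
    then show ?thesis by simp
  qed
  then have "L - M = 0"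
    using assms(1) unfolding sadic_separated_def spow_dvd_def by blast
  then show ?thesis by simp
qed

lemma sadic_Lim_eqI: "sadic_separated s \<Longrightarrow> sadic_lim s f L \<Longrightarrow> sadic_Lim s f = L"
  unfolding sadic_Lim_def using sadic_lim_unique by blast

lemma sadic_lim_const: "sadic_lim s (\<lambda>n. c) c"
  unfolding sadic_lim_iff by simp

lemma sadic_lim_Suc: "sadic_lim s f L \<Longrightarrow> sadic_lim s (\<lambda>n. f (Suc n)) L"
  unfolding sadic_lim_iff by (meson le_SucI)

lemma sadic_lim_additive:
  assumes "sadic_lim s f L"
    and add: "\<And>x y. h (x + y) = h x + h y"
    and order: "\<And>k x. spow_dvd s k x \<Longrightarrow> spow_dvd s' k (h x)"
  shows "sadic_lim s' (\<lambda>n. h (f n)) (h L)"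
proof -
  have "h (x - y) = h x - h y" for x y by (metis add eq_diff_eq)
  then show ?thesis using assms(1) order unfolding sadic_lim_iff by metis
qed

lemma sadic_lim_add:
  assumes "sadic_lim s f L" and "sadic_lim s g M"
  shows "sadic_lim s (\<lambda>n. f n + g n) (L + M)"
  unfolding sadic_lim_iff
proof
  fix k
  obtain N1 where N1: "\<forall>n\<ge>N1. spow_dvd s k (f n - L)" using assms(1) unfolding sadic_lim_iff by blast
  obtain N2 where N2: "\<forall>n\<ge>N2. spow_dvd s k (g n - M)" using assms(2) unfolding sadic_lim_iff by blast
  have "spow_dvd s k (f n + g n - (L + M))" if "n \<ge> max N1 N2" for n
    using spow_dvd_add[of s k "f n - L" "g n - M"] N1 N2 that by (simp add: algebra_simps)
  then show "\<exists>N. \<forall>n\<ge>N. spow_dvd s k (f n + g n - (L + M))" by blast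
qed

lemma sadic_lim_mult:
  assumes "sadic_complete s" and "sadic_lim s f L" and "sadic_lim s g M"
  shows "sadic_lim s (\<lambda>n. f n * g n) (L * M)"
  unfolding sadic_lim_iff
proof
  fix k
  obtain N1 where N1: "\<forall>n\<ge>N1. spow_dvd s k (f n - L)" using assms(2) unfolding sadic_lim_iff by blast
  obtain N2 where N2: "\<forall>n\<ge>N2. spow_dvd s k (g n - M)" using assms(3) unfolding sadic_lim_iff by blast
  have "spow_dvd s k (f n * g n - L * M)" if "n \<ge> max N1 N2" for n
  proof -
    have "spow_dvd s k ((f n - L) * g n + L * (g n - M))"
      using N1 N2 that
      by (intro spow_dvd_add spow_dvd_mult_right spow_dvd_mult_left[OF assms(1)]) auto
    then show ?thesis by (simp add: algebra_simps)
  qed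
  then show "\<exists>N. \<forall>n\<ge>N. spow_dvd s k (f n * g n - L * M)" by blast
qed

lemma sadic_lim_approx:
  assumes "sadic_lim s f L" and "\<And>n. spow_dvd s n (f n - g n)"
  shows "sadic_lim s g L"
  unfolding sadic_lim_iff
proof
  fix k
  obtain N where N: "\<forall>n\<ge>N. spow_dvd s k (f n - L)" using assms(1) unfolding sadic_lim_iff by blast
  have "spow_dvd s k (g n - L)" if "n \<ge> max N k" for n
    using spow_dvd_diff[of s k "f n - L" "f n - g n"] N spow_dvd_mono[OF _ assms(2)] that by simp
  then show "\<exists>N. \<forall>n\<ge>N. spow_dvd s k (g n - L)" by blast
qed

section \<open>s-adic series\<close>

definition sadic_suminf :: "'a::ring_1 \<Rightarrow> (nat \<Rightarrow> 'a) \<Rightarrow> 'a" where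
  "sadic_suminf s a = sadic_Lim s (\<lambda>N. \<Sum>n<N. a n)"

text \<open>Requiring \<open>s ^ n\<close> to divide the \<open>n\<close>-th term, rather than only s-adic convergence of the
  terms to 0, suffices for the exponential series and keeps the Cauchy product elementary.\<close>

lemma sadic_suminf_lim:
  assumes c: "sadic_complete s" and a: "\<And>n. spow_dvd s n (a n)"
  shows "sadic_lim s (\<lambda>N. \<Sum>n<N. a n) (sadic_suminf s a)"
proof -
  have tail: "spow_dvd s k ((\<Sum>n<N. a n) - (\<Sum>n<k. a n))" if "k \<le> N" for k N
  proof -
    have "(\<Sum>n<N. a n) - (\<Sum>n<k. a n) = (\<Sum>n\<in>{k..<N}. a n)"
      using that by (metis add_diff_cancel_left' lessThan_atLeast0 sum.atLeastLessThan_concat zero_le)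
    moreover have "spow_dvd s k (\<Sum>n\<in>{k..<N}. a n)"
      by (rule spow_dvd_sum) (auto intro: spow_dvd_mono[OF _ a])
    ultimately show ?thesis by simp
  qed
  have "sadic_cauchy s (\<lambda>N. \<Sum>n<N. a n)"
    unfolding sadic_cauchy_def
  proof
    fix k
    have "spow_dvd s k ((\<Sum>i<m. a i) - (\<Sum>i<n. a i))" if "m \<ge> k" "n \<ge> k" for m n
      using spow_dvd_diff[OF tail tail, OF that] by simp
    then show "\<exists>N. \<forall>m\<ge>N. \<forall>n\<ge>N. \<exists>y. (\<Sum>n<m. a n) - (\<Sum>n<n. a n) = s ^ k * y"
      unfolding spow_dvd_def by blast
  qed
  then obtain L where "sadic_lim s (\<lambda>N. \<Sum>n<N. a n) L"
    using c unfolding sadic_complete_def by blast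
  then show ?thesis
    unfolding sadic_suminf_def using sadic_Lim_eqI[OF sadic_complete_separated[OF c]] by simp
qed

lemma sadic_suminf_eqI:
  "sadic_complete s \<Longrightarrow> sadic_lim s (\<lambda>N. \<Sum>n<N. a n) L \<Longrightarrow> sadic_suminf s a = L"
  unfolding sadic_suminf_def by (rule sadic_Lim_eqI[OF sadic_complete_separated])

lemma sadic_suminf_0: "sadic_complete s \<Longrightarrow> sadic_suminf s (\<lambda>n. 0) = 0"
  by (rule sadic_suminf_eqI) (simp_all add: sadic_lim_const)

lemma sadic_suminf_additive:
  assumes "sadic_complete s" and "sadic_complete s'" and a: "\<And>n. spow_dvd s n (a n)"
    and add: "\<And>x y. h (x + y) = h x + h y"
    and order: "\<And>k x. spow_dvd s k x \<Longrightarrow> spow_dvd s' k (h x)"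
  shows "h (sadic_suminf s a) = sadic_suminf s' (\<lambda>n. h (a n))"
proof -
  have "h 0 = 0" using add[of 0 0] by simp
  then have sum: "h (\<Sum>n<N. a n) = (\<Sum>n<N. h (a n))" for N
    by (induction N) (simp_all add: add)
  have "sadic_lim s' (\<lambda>N. h (\<Sum>n<N. a n)) (h (sadic_suminf s a))"
    by (rule sadic_lim_additive[where h = h, OF sadic_suminf_lim[OF assms(1) a] add order])
  then show ?thesis
    unfolding sum by (rule sadic_suminf_eqI[OF assms(2), symmetric])
qed

lemma sadic_suminf_mult_left:
  "sadic_complete s \<Longrightarrow> (\<And>n. spow_dvd s n (a n)) \<Longrightarrow> sadic_suminf s (\<lambda>n. w * a n) = w * sadic_suminf s a"
  by (rule sadic_suminf_additive[symmetric]) (simp_all add: distrib_left spow_dvd_mult_left)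

lemma sadic_suminf_mult_right:
  "sadic_complete s \<Longrightarrow> (\<And>n. spow_dvd s n (a n)) \<Longrightarrow> sadic_suminf s (\<lambda>n. a n * w) = sadic_suminf s a * w"
  by (rule sadic_suminf_additive[symmetric]) (simp_all add: distrib_right spow_dvd_mult_right)

lemma sadic_suminf_scaleR:
  fixes a :: "nat \<Rightarrow> 'a::real_algebra_1"
  shows "sadic_complete s \<Longrightarrow> (\<And>n. spow_dvd s n (a n)) \<Longrightarrow>
    sadic_suminf s (\<lambda>n. r *\<^sub>R a n) = r *\<^sub>R sadic_suminf s a"
  by (rule sadic_suminf_additive[symmetric]) (simp_all add: scaleR_right_distrib spow_dvd_scaleR)

lemma sadic_suminf_add:
  assumes c: "sadic_complete s" and a: "\<And>n. spow_dvd s n (a n)" and b: "\<And>n. spow_dvd s n (b n)"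
  shows "sadic_suminf s (\<lambda>n. a n + b n) = sadic_suminf s a + sadic_suminf s b"
  by (rule sadic_suminf_eqI[OF c])
    (simp add: sum.distrib sadic_lim_add sadic_suminf_lim[OF c a] sadic_suminf_lim[OF c b])

lemma sadic_suminf_split_first:
  assumes c: "sadic_complete s" and a: "\<And>n. spow_dvd s n (a n)"
  shows "sadic_suminf s a = a 0 + sadic_suminf s (\<lambda>n. a (Suc n))"
proof -
  have "sadic_lim s (\<lambda>N. a 0 + (\<Sum>n<N. a (Suc n))) (sadic_suminf s a)"
    using sadic_lim_Suc[OF sadic_suminf_lim[OF c a]] by (simp only: sum.lessThan_Suc_shift)
  then have "sadic_lim s (\<lambda>N. (a 0 + (\<Sum>n<N. a (Suc n))) + - a 0) (sadic_suminf s a + - a 0)"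
    by (rule sadic_lim_add[OF _ sadic_lim_const])
  then have "sadic_suminf s (\<lambda>n. a (Suc n)) = sadic_suminf s a - a 0"
    by (intro sadic_suminf_eqI[OF c]) simp
  then show ?thesis by simp
qed

lemma sadic_suminf_mult:
  assumes c: "sadic_complete s" and a: "\<And>n. spow_dvd s n (a n)" and b: "\<And>n. spow_dvd s n (b n)"
  shows "sadic_suminf s a * sadic_suminf s b = sadic_suminf s (\<lambda>n. \<Sum>i\<le>n. a i * b (n - i))"
proof -
  have ab: "spow_dvd s (i + j) (a i * b j)" for i j
  proof -
    obtain y where y: "a i = s ^ i * y" using a unfolding spow_dvd_def by blast
    obtain z where z: "b j = s ^ j * z" using b unfolding spow_dvd_def by blast
    show ?thesis by (simp add: y z power_mult_power_mult[OF c])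
  qed
  have "sadic_lim s (\<lambda>N. (\<Sum>n<N. a n) * (\<Sum>n<N. b n)) (sadic_suminf s a * sadic_suminf s b)"
    by (rule sadic_lim_mult[OF c sadic_suminf_lim[OF c a] sadic_suminf_lim[OF c b]])
  then have "sadic_lim s (\<lambda>N. \<Sum>n<N. \<Sum>i\<le>n. a i * b (n - i)) (sadic_suminf s a * sadic_suminf s b)"
  proof (rule sadic_lim_approx)
    fix N :: nat
    let ?S = "{..<N} \<times> {..<N}" and ?T = "{(i, j). i + j < N}"
    have "(\<Sum>n<N. a n) * (\<Sum>n<N. b n) = (\<Sum>(i, j)\<in>?S. a i * b j)"
      by (simp add: sum_product sum.cartesian_product)
    also have "\<dots> = (\<Sum>(i, j)\<in>?S - ?T. a i * b j) + (\<Sum>(i, j)\<in>?T. a i * b j)"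
      by (rule sum.subset_diff) auto
    also have "(\<Sum>(i, j)\<in>?T. a i * b j) = (\<Sum>n<N. \<Sum>i\<le>n. a i * b (n - i))"
      by (rule sum.triangle_reindex)
    finally have "(\<Sum>n<N. a n) * (\<Sum>n<N. b n) - (\<Sum>n<N. \<Sum>i\<le>n. a i * b (n - i))
        = (\<Sum>(i, j)\<in>?S - ?T. a i * b j)"
      by simp
    moreover have "spow_dvd s N (\<Sum>(i, j)\<in>?S - ?T. a i * b j)"
      by (rule spow_dvd_sum) (auto intro: spow_dvd_mono[OF _ ab])
    ultimately show "spow_dvd s N ((\<Sum>n<N. a n) * (\<Sum>n<N. b n) - (\<Sum>n<N. \<Sum>i\<le>n. a i * b (n - i)))"
      by simp
  qed
  then show ?thesis by (rule sadic_suminf_eqI[OF c, symmetric])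
qed

section \<open>The s-adic exponential\<close>

definition exp_coeff :: "'a::real_algebra_1 \<Rightarrow> nat \<Rightarrow> 'a" where
  "exp_coeff x n = x ^ n /\<^sub>R fact n"

lemma exp_coeff_0 [simp]: "exp_coeff x 0 = 1"
  by (simp add: exp_coeff_def)

lemma exp_coeff_1 [simp]: "exp_coeff x (Suc 0) = x"
  by (simp add: exp_coeff_def)

lemma mult_exp_coeff: "x * exp_coeff x n = real (Suc n) *\<^sub>R exp_coeff x (Suc n)"
  by (simp add: exp_coeff_def del: of_nat_Suc)

lemma exp_coeff_commute: "x * y = y * x \<Longrightarrow> y * exp_coeff x n = exp_coeff x n * y"
  by (simp add: exp_coeff_def power_commuting_commutes)

text \<open>The library proves this as \<open>exp_series_add_commuting\<close> only in Banach algebras.\<close>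

lemma exp_coeff_add_commuting:
  assumes xy: "x * y = y * x"
  shows "exp_coeff (x + y) n = (\<Sum>i\<le>n. exp_coeff x i * exp_coeff y (n - i))"
proof (induction n)
  case 0
  show ?case by simp
next
  case (Suc n)
  let ?c = "\<lambda>i. exp_coeff x i * exp_coeff y (Suc n - i)"
  have "real (Suc n) *\<^sub>R exp_coeff (x + y) (Suc n) = (x + y) * exp_coeff (x + y) n"
    by (simp only: mult_exp_coeff)
  also have "\<dots> = x * (\<Sum>i\<le>n. exp_coeff x i * exp_coeff y (n - i))
      + y * (\<Sum>i\<le>n. exp_coeff x i * exp_coeff y (n - i))"
    by (simp only: Suc.IH distrib_right)
  also have "x * (\<Sum>i\<le>n. exp_coeff x i * exp_coeff y (n - i)) = (\<Sum>i\<le>Suc n. real i *\<^sub>R ?c i)"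
    by (simp add: sum_distrib_left mult.assoc[symmetric] mult_exp_coeff sum.atMost_Suc_shift
        del: sum.atMost_Suc)
  also have "y * (\<Sum>i\<le>n. exp_coeff x i * exp_coeff y (n - i)) = (\<Sum>i\<le>Suc n. real (Suc n - i) *\<^sub>R ?c i)"
  proof -
    have "y * (exp_coeff x i * exp_coeff y (n - i)) = real (Suc n - i) *\<^sub>R ?c i" if "i \<le> n" for i
    proof -
      have "y * (exp_coeff x i * exp_coeff y (n - i)) = exp_coeff x i * (y * exp_coeff y (n - i))"
        by (simp add: mult.assoc[symmetric] exp_coeff_commute[OF xy])
      then show ?thesis using that by (simp add: mult_exp_coeff Suc_diff_le del: of_nat_Suc)
    qed
    then show ?thesis by (simp add: sum_distrib_left)
  qed
  also have "(\<Sum>i\<le>Suc n. real i *\<^sub>R ?c i) + (\<Sum>i\<le>Suc n. real (Suc n - i) *\<^sub>R ?c i)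
      = real (Suc n) *\<^sub>R (\<Sum>i\<le>Suc n. ?c i)"
    by (simp add: scaleR_sum_right flip: sum.distrib scaleR_add_left of_nat_add del: sum.atMost_Suc)
  finally show ?case
    by (simp del: sum.atMost_Suc of_nat_Suc)
qed

lemma sexp_eq_suminf: "sexp s x = sadic_suminf s (\<lambda>n. s ^ n * exp_coeff x n)"
  by (simp add: sexp_def sadic_suminf_def exp_coeff_def divide_inverse_commute)

lemma sexpm1_div_eq_suminf: "sexpm1_div s x = sadic_suminf s (\<lambda>n. s ^ n * exp_coeff x (Suc n))"
  by (simp add: sexpm1_div_def sadic_suminf_def exp_coeff_def divide_inverse_commute
      del: power_Suc fact_Suc)

lemma sexp_eq_1_plus_sexpm1_div:
  assumes c: "sadic_complete s"
  shows "sexp s x = 1 + s * sexpm1_div s x"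
proof -
  have "sexp s x = 1 + sadic_suminf s (\<lambda>n. s * (s ^ n * exp_coeff x (Suc n)))"
    unfolding sexp_eq_suminf by (subst sadic_suminf_split_first[OF c]) (simp_all add: mult.assoc)
  then show ?thesis
    unfolding sexpm1_div_eq_suminf by (simp add: sadic_suminf_mult_left[OF c])
qed

lemma sexpm1_div_0: "sadic_complete s \<Longrightarrow> sexpm1_div s 0 = 0"
  by (simp add: sexpm1_div_eq_suminf exp_coeff_def sadic_suminf_0 del: power_Suc)

lemma sexp_0: "sadic_complete s \<Longrightarrow> sexp s 0 = 1"
  by (simp add: sexp_eq_1_plus_sexpm1_div sexpm1_div_0)

lemma sexpm1_div_add:
  assumes c: "sadic_complete s" and xy: "x * y = y * x"
  shows "sexpm1_div s (x + y) = sexpm1_div s x + sexp s x * sexpm1_div s y"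
proof -
  let ?e = "\<lambda>n. s ^ n * exp_coeff x n" and ?p = "\<lambda>x n. s ^ n * exp_coeff x (Suc n)"
  have prod: "?e i * ?p y j = s ^ (i + j) * (exp_coeff x i * exp_coeff y (Suc j))" for i j
    by (rule power_mult_power_mult[OF c])
  have coeff: "?p (x + y) n = ?p x n + (\<Sum>i\<le>n. ?e i * ?p y (n - i))" for n
  proof -
    have "?p (x + y) n
        = s ^ n * (exp_coeff x (Suc n) + (\<Sum>i\<le>n. exp_coeff x i * exp_coeff y (Suc n - i)))"
      by (simp add: exp_coeff_add_commuting[OF xy] del: sum.atMost_Suc) (simp add: add.commute)
    also have "\<dots> = ?p x n + (\<Sum>i\<le>n. ?e i * ?p y (n - i))"
      by (simp add: distrib_left sum_distrib_left prod Suc_diff_le)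
    finally show ?thesis .
  qed
  have "sexpm1_div s (x + y) = sadic_suminf s (\<lambda>n. ?p x n + (\<Sum>i\<le>n. ?e i * ?p y (n - i)))"
    unfolding sexpm1_div_eq_suminf coeff ..
  also have "\<dots> = sexpm1_div s x + sadic_suminf s (\<lambda>n. \<Sum>i\<le>n. ?e i * ?p y (n - i))"
    unfolding sexpm1_div_eq_suminf
    by (rule sadic_suminf_add[OF c]) (simp_all add: prod spow_dvd_sum)
  also have "sadic_suminf s (\<lambda>n. \<Sum>i\<le>n. ?e i * ?p y (n - i)) = sexp s x * sexpm1_div s y"
    unfolding sexpm1_div_eq_suminf sexp_eq_suminf
    by (rule sadic_suminf_mult[OF c, symmetric]) simp_all
  finally show ?thesis .
qed

lemma sexp_add:
  assumes c: "sadic_complete s" and xy: "x * y = y * x"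
  shows "sexp s (x + y) = sexp s x * sexp s y"
proof -
  have "sexp s x * sexp s y = sexp s x + (sexp s x * s) * sexpm1_div s y"
    by (simp add: sexp_eq_1_plus_sexpm1_div[OF c, of y] distrib_left mult.assoc)
  also have "\<dots> = 1 + s * sexpm1_div s (x + y)"
    by (simp add: sexpm1_div_add[OF c xy] sexp_eq_1_plus_sexpm1_div[OF c, of x] distrib_left
        sadic_complete_central[OF c] mult.assoc)
  finally show ?thesis by (simp add: sexp_eq_1_plus_sexpm1_div[OF c])
qed

lemma sexp_inverse:
  assumes "sadic_complete s"
  shows "sexp s x * sexp s (- x) = 1" and "sexp s (- x) * sexp s x = 1"
  using sexp_add[OF assms, of x "- x"] sexp_add[OF assms, of "- x" x]
  by (simp_all add: sexp_0[OF assms])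

lemma sexp_mult_sexpm1_div_minus:
  assumes "sadic_complete s"
  shows "sexp s x * sexpm1_div s (- x) = - sexpm1_div s x"
  using sexpm1_div_add[OF assms, of x "- x"]
  by (simp add: sexpm1_div_0[OF assms] eq_neg_iff_add_eq_0 add.commute)

section \<open>Commutators with s-adic exponentials\<close>

lemma comm_eq_0_iff: "comm a b = 0 \<longleftrightarrow> a * b = b * a"
  by (simp add: comm_def)

lemma comm_eqD: "comm a b = c \<Longrightarrow> a * b = b * a + c"
  by (simp add: comm_def algebra_simps)

lemma comm_swap: "comm b a = - comm a b"
  by (simp add: comm_def)

lemma comm_self [simp]: "comm a a = 0"
  by (simp add: comm_def)

lemma comm_one_right [simp]: "comm a (1::'a::ring_1) = 0"
  by (simp add: comm_def)

lemma comm_minus_left: "comm (- a) b = - comm a b"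
  by (simp add: comm_def)

lemma comm_minus_right: "comm a (- b) = - comm a b"
  by (simp add: comm_def)

lemma comm_add_right: "comm c (a + b) = comm c a + comm c b"
  by (simp add: comm_def algebra_simps)

lemma comm_add_left: "comm (a + b) c = comm a c + comm b c"
  by (simp add: comm_def algebra_simps)

lemma comm_mult_right: "comm c (a * b) = comm c a * b + a * comm c b"
  by (simp add: comm_def algebra_simps)

lemma comm_mult_left: "comm (a * b) c = a * comm b c + comm a c * b"
  by (simp add: comm_def algebra_simps)

lemma comm_scaleR_right: "comm c (r *\<^sub>R a) = r *\<^sub>R comm c (a::'a::real_algebra_1)"
  by (simp add: comm_def scaleR_right_diff_distrib)

lemma comm_scaleR_left: "comm (r *\<^sub>R a) c = r *\<^sub>R comm (a::'a::real_algebra_1) c"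
  by (simp add: comm_def scaleR_right_diff_distrib)

lemma comm_power_mult:
  assumes "sadic_complete s"
  shows "comm c (s ^ k * y) = s ^ k * comm c y"
proof -
  have "c * s ^ k = s ^ k * c" by (rule sadic_complete_power_central[OF assms, symmetric])
  then show ?thesis by (simp add: comm_def right_diff_distrib mult.assoc[symmetric])
qed

lemma comm_central_mult: "sadic_complete s \<Longrightarrow> comm c (s * y) = s * comm c y"
  using comm_power_mult[of s c 1] by simp

lemma comm_sadic_suminf:
  assumes "sadic_complete s" and "\<And>n. spow_dvd s n (a n)"
  shows "comm c (sadic_suminf s a) = sadic_suminf s (\<lambda>n. comm c (a n))"
  using assms
  by (intro sadic_suminf_additive) (auto simp: comm_add_right spow_dvd_def comm_power_mult)

lemma comm_exp_coeff_eq_0: "comm y x = 0 \<Longrightarrow> comm y (exp_coeff x n) = 0"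
  by (simp add: comm_eq_0_iff exp_coeff_commute)

lemma comm_sexpm1_div_eq_0:
  assumes c: "sadic_complete s" and "comm y x = 0"
  shows "comm y (sexpm1_div s x) = 0"
  using assms
  by (simp add: sexpm1_div_eq_suminf comm_sadic_suminf comm_power_mult comm_exp_coeff_eq_0
      sadic_suminf_0 del: power_Suc)

lemma comm_sexp_eq_0: "sadic_complete s \<Longrightarrow> comm y x = 0 \<Longrightarrow> comm y (sexp s x) = 0"
  by (simp add: sexp_eq_1_plus_sexpm1_div comm_add_right comm_central_mult comm_sexpm1_div_eq_0)

lemma comm_power_Suc:
  fixes x :: "'a::real_algebra_1"
  assumes dx: "comm d x = e" and xe: "comm x e = 0"
  shows "comm d (x ^ Suc m) = real (Suc m) *\<^sub>R (x ^ m * e)"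
proof (induction m)
  case 0
  show ?case using dx by simp
next
  case (Suc m)
  have "comm d (x ^ Suc (Suc m)) = e * x ^ Suc m + x * (real (Suc m) *\<^sub>R (x ^ m * e))"
    using comm_mult_right[of d x "x ^ Suc m"] by (simp only: power_Suc[of x "Suc m"] dx Suc)
  also have "e * x ^ Suc m = x ^ Suc m * e"
    using xe by (metis comm_eq_0_iff power_commuting_commutes)
  also have "x ^ Suc m * e + x * (real (Suc m) *\<^sub>R (x ^ m * e))
      = (1 + real (Suc m)) *\<^sub>R (x ^ Suc m * e)"
    by (simp only: scaleR_add_left scaleR_one mult_scaleR_right mult.assoc power_Suc)
  finally show ?case by simp
qed

lemma comm_power_Suc_Suc:
  fixes x :: "'a::real_algebra_1"
  assumes cx: "comm c x = d" and dx: "comm d x = e" and xe: "comm x e = 0"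
  shows "comm c (x ^ Suc (Suc m))
    = real (Suc (Suc m)) *\<^sub>R (x ^ Suc m * d) + (real (Suc (Suc m)) * real (Suc m) / 2) *\<^sub>R (x ^ m * e)"
proof (induction m)
  case 0
  have "d * x = x * d + e" by (rule comm_eqD[OF dx])
  then show ?case
    using comm_mult_right[of c x x] cx by (simp add: scaleR_2 algebra_simps)
next
  case (Suc m)
  let ?k = "Suc (Suc m)"
  have "comm c (x ^ Suc ?k) = d * x ^ ?k + x * comm c (x ^ ?k)"
    using comm_mult_right[of c x "x ^ ?k"] by (simp only: power_Suc[of x ?k] cx)
  also have "d * x ^ ?k = x ^ ?k * d + real ?k *\<^sub>R (x ^ Suc m * e)"
    by (rule comm_eqD[OF comm_power_Suc[OF dx xe]])
  also have "x * comm c (x ^ ?k)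
      = real ?k *\<^sub>R (x ^ ?k * d) + (real ?k * real (Suc m) / 2) *\<^sub>R (x ^ Suc m * e)"
    by (simp only: Suc distrib_left mult_scaleR_right mult.assoc[symmetric] power_Suc[symmetric])
  also have "x ^ ?k * d + real ?k *\<^sub>R (x ^ Suc m * e)
      + (real ?k *\<^sub>R (x ^ ?k * d) + (real ?k * real (Suc m) / 2) *\<^sub>R (x ^ Suc m * e))
    = (1 + real ?k) *\<^sub>R (x ^ ?k * d) + (real ?k + real ?k * real (Suc m) / 2) *\<^sub>R (x ^ Suc m * e)"
    by (simp only: scaleR_add_left scaleR_one add_ac)
  also have "1 + real ?k = real (Suc ?k)" by simp
  also have "real ?k + real ?k * real (Suc m) / 2 = real (Suc ?k) * real ?k / 2"
    by (simp add: field_simps)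
  finally show ?case .
qed

lemma comm_exp_coeff_Suc_Suc:
  fixes x :: "'a::real_algebra_1"
  assumes "comm c x = d" and "comm d x = e" and "comm x e = 0"
  shows "comm c (exp_coeff x (Suc (Suc m)))
    = exp_coeff x (Suc m) * d + (1 / 2) *\<^sub>R (exp_coeff x m * e)"
proof -
  have "inverse (fact (Suc (Suc m))) * real (Suc (Suc m)) = inverse (fact (Suc m) :: real)"
    by (simp del: of_nat_Suc)
  moreover have "inverse (fact (Suc (Suc m))) * (real (Suc (Suc m)) * real (Suc m) / 2)
      = 1 / 2 * inverse (fact m :: real)"
    by (simp add: field_simps del: of_nat_Suc)
  ultimately show ?thesis
    by (simp only: exp_coeff_def comm_scaleR_right comm_power_Suc_Suc[OF assms] scaleR_add_right
        scaleR_scaleR scaleR_left_commute[of "1 / 2"] mult_scaleR_left)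
qed

lemma comm_sexpm1_div_nested:
  assumes c: "sadic_complete s" and cx: "comm c x = d" and "comm d x = e" and "comm x e = 0"
  shows "comm c (sexpm1_div s x) = sexp s x * d + (1 / 2) *\<^sub>R (s * (sexp s x * e))"
proof -
  let ?t = "\<lambda>n. s ^ n * exp_coeff x (Suc n)" and ?u = "\<lambda>n. s ^ n * exp_coeff x n"
  have "comm c (sexpm1_div s x) = sadic_suminf s (\<lambda>n. comm c (?t n))"
    unfolding sexpm1_div_eq_suminf by (rule comm_sadic_suminf[OF c]) simp
  also have "\<dots> = comm c (?t 0) + sadic_suminf s (\<lambda>n. comm c (?t (Suc n)))"
    by (rule sadic_suminf_split_first[OF c]) (simp add: comm_power_mult[OF c])
  also have "(\<lambda>n. comm c (?t (Suc n))) = (\<lambda>n. s * (?t n * d) + (1 / 2) *\<^sub>R (s * (?u n * e)))"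
    by (simp add: comm_central_mult[OF c] comm_power_mult[OF c] comm_exp_coeff_Suc_Suc[OF assms(2-)]
        distrib_left mult.assoc scaleR_add_right)
  also have "sadic_suminf s \<dots> = s * (sexpm1_div s x * d) + (1 / 2) *\<^sub>R (s * (sexp s x * e))"
    by (simp add: sadic_suminf_add sadic_suminf_scaleR sadic_suminf_mult_left sadic_suminf_mult_right
        spow_dvd_mult_left spow_dvd_mult_right spow_dvd_scaleR c sexpm1_div_eq_suminf sexp_eq_suminf
        del: power_Suc)
  finally show ?thesis
    using cx by (simp add: sexp_eq_1_plus_sexpm1_div[OF c] distrib_right mult.assoc)
qed

lemma comm_sexpm1_div:
  "sadic_complete s \<Longrightarrow> comm c x = d \<Longrightarrow> comm d x = 0 \<Longrightarrow> comm c (sexpm1_div s x) = sexp s x * d"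
  using comm_sexpm1_div_nested[of s c x d 0] by (simp add: comm_def)

locale real_algebra_hom =
  fixes h :: "'a::real_algebra_1 \<Rightarrow> 'b::real_algebra_1"
  assumes hom_add: "h (x + y) = h x + h y"
    and hom_mult: "h (x * y) = h x * h y"
    and hom_one: "h 1 = 1"
    and hom_scaleR: "h (r *\<^sub>R x) = r *\<^sub>R h x"
begin

lemma hom_diff: "h (x - y) = h x - h y"
  using hom_add[of "x - y" y] by (simp add: eq_diff_eq)

lemma hom_power: "h (x ^ n) = h x ^ n"
  by (induction n) (simp_all add: hom_one hom_mult)

lemma hom_sexpm1_div:
  assumes "sadic_complete s" and "sadic_complete s'" and "h s = s'"
  shows "h (sexpm1_div s x) = sexpm1_div s' (h x)"
proof -
  have "h (sadic_suminf s (\<lambda>n. s ^ n * exp_coeff x (Suc n)))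
      = sadic_suminf s' (\<lambda>n. h (s ^ n * exp_coeff x (Suc n)))"
    using assms(3)
    by (intro sadic_suminf_additive[OF assms(1,2)])
      (auto simp: hom_add spow_dvd_def hom_mult hom_power)
  then show ?thesis
    using assms(3)
    by (simp add: sexpm1_div_eq_suminf exp_coeff_def hom_mult hom_power hom_scaleR del: power_Suc)
qed

end

section \<open>The deformed algebra\<close>

locale deformed_so22 =
  fixes \<mu> \<nu> :: real and s H P K D C1 C2 :: "'a::real_algebra_1"
  assumes complete: "sadic_complete s"
    and comm_K_H: "comm K H = \<nu> *\<^sub>R sexpm1_div s P"
    and comm_K_P: "comm K P = \<mu> *\<^sub>R (sexp s (- P) * H)"
    and comm_H_P: "comm H P = 0"
    and comm_K_D: "comm K D = 0"
    and comm_D_H: "comm D H = H"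
    and comm_D_C1: "comm D C1 = - C1"
    and comm_H_C1: "comm H C1 = - ((2 * \<nu>) *\<^sub>R D)"
    and comm_D_P: "comm D P = - sexpm1_div s (- P)"
    and comm_D_C2: "comm D C2 = - C2 - s * (\<mu> *\<^sub>R D ^ 2)"
    and comm_P_C2: "comm P C2 = (2 * \<mu>) *\<^sub>R D"
    and comm_K_C1: "comm K C1 = \<nu> *\<^sub>R C2 + s * ((\<mu> * \<nu>) *\<^sub>R D ^ 2)"
    and comm_K_C2: "comm K C2 = \<mu> *\<^sub>R C1"
    and comm_P_C1: "comm P C1 = - (sexp s (- P) * K) - K * sexp s (- P)"
    and comm_H_C2: "comm H C2 = 2 * K + s * (\<mu> *\<^sub>R (D * H + H * D))"
    and comm_C1_C2: "comm C1 C2 = - (s * (\<mu> *\<^sub>R (D * C1 + C1 * D)))"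
begin

abbreviation "\<P> \<equiv> sexpm1_div s P"
abbreviation "\<C>\<^sub>2 \<equiv> C2 + s * (\<mu> *\<^sub>R D ^ 2)"
abbreviation "E \<equiv> sexp s P"
abbreviation "Einv \<equiv> sexp s (- P)"
abbreviation "Q \<equiv> sexpm1_div s (- P)"

lemma E_eq: "E = 1 + s * \<P>"
  by (rule sexp_eq_1_plus_sexpm1_div[OF complete])

lemma Einv_eq: "Einv = 1 + s * Q"
  by (rule sexp_eq_1_plus_sexpm1_div[OF complete])

lemma E_Einv: "E * Einv = 1" and Einv_E: "Einv * E = 1"
  by (rule sexp_inverse[OF complete])+

lemma ring_inv_E: "ring_inv (1 + s * \<P>) = Einv"
  unfolding ring_inv_def E_eq[symmetric]
proof (rule the_equality)
  fix y assume "E * y = 1 \<and> y * E = 1"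
  then have "Einv * (E * y) = Einv" by simp
  then show "y = Einv" by (simp add: mult.assoc[symmetric] Einv_E)
qed (simp add: E_Einv Einv_E)

lemma E_Q: "E * Q = - \<P>"
  by (rule sexp_mult_sexpm1_div_minus[OF complete])

lemma comm_P_minus_P: "comm P (- P) = 0"
  by (simp add: comm_def)

lemma comm_Einv_P: "comm Einv P = 0"
  using comm_sexp_eq_0[OF complete comm_P_minus_P] comm_swap[of Einv P] by simp

lemma comm_Q_P: "comm Q P = 0"
  using comm_sexpm1_div_eq_0[OF complete comm_P_minus_P] comm_swap[of Q P] by simp

lemma comm_H_Einv: "comm H Einv = 0"
  by (rule comm_sexp_eq_0[OF complete]) (simp add: comm_minus_right comm_H_P)

lemma comm_calC2: "comm c \<C>\<^sub>2 = comm c C2 + s * (\<mu> *\<^sub>R comm c (D * D))"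
  by (simp add: comm_add_right comm_central_mult[OF complete] comm_scaleR_right power2_eq_square)

lemma comm_K_calP: "comm K \<P> = \<mu> *\<^sub>R H"
proof -
  have "comm (\<mu> *\<^sub>R (Einv * H)) P = 0"
    by (simp add: comm_scaleR_left comm_mult_left comm_H_P comm_Einv_P)
  then have "comm K \<P> = E * (\<mu> *\<^sub>R (Einv * H))"
    by (rule comm_sexpm1_div[OF complete comm_K_P])
  then show ?thesis by (simp add: mult.assoc[symmetric] E_Einv)
qed

lemma comm_H_calP: "comm H \<P> = 0"
  by (rule comm_sexpm1_div_eq_0[OF complete comm_H_P])

lemma comm_D_calP: "comm D \<P> = \<P>"
proof -
  have "comm D \<P> = E * - Q"
    by (rule comm_sexpm1_div[OF complete comm_D_P]) (simp add: comm_minus_left comm_Q_P)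
  then show ?thesis by (simp add: E_Q)
qed

lemma comm_D_calC2: "comm D \<C>\<^sub>2 = - \<C>\<^sub>2"
  by (simp only: comm_calC2) (simp add: comm_D_C2 comm_mult_right power2_eq_square)

lemma comm_calP_calC2: "comm \<P> \<C>\<^sub>2 = (2 * \<mu>) *\<^sub>R D"
proof -
  have "comm C2 \<P> = E * - ((2 * \<mu>) *\<^sub>R D) + (1 / 2) *\<^sub>R (s * (E * ((2 * \<mu>) *\<^sub>R Q)))"
  proof (rule comm_sexpm1_div_nested[OF complete])
    show "comm C2 P = - ((2 * \<mu>) *\<^sub>R D)" using comm_swap[of C2 P] comm_P_C2 by simp
    show "comm (- ((2 * \<mu>) *\<^sub>R D)) P = (2 * \<mu>) *\<^sub>R Q"
      by (simp add: comm_minus_left comm_scaleR_left comm_D_P)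
    show "comm P ((2 * \<mu>) *\<^sub>R Q) = 0"
      using comm_Q_P comm_swap[of Q P] by (simp add: comm_scaleR_right)
  qed
  also have "\<dots> = - ((2 * \<mu>) *\<^sub>R (E * D)) - \<mu> *\<^sub>R (s * \<P>)"
    using sadic_complete_central[OF complete, of E] by (simp add: mult.assoc[symmetric] E_Q)
  finally have C2: "comm \<P> C2 = (2 * \<mu>) *\<^sub>R (E * D) + \<mu> *\<^sub>R (s * \<P>)"
    using comm_swap[of \<P> C2] by simp
  have "D * \<P> = \<P> * D + \<P>"
    by (rule comm_eqD[OF comm_D_calP])
  then have DD: "comm \<P> (D * D) = - (\<P> * D) - (\<P> * D + \<P>)"
    using comm_swap[of \<P> D] comm_D_calP by (simp add: comm_mult_right)
  have "s * (\<mu> *\<^sub>R (- (\<P> * D) - (\<P> * D + \<P>)))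
      = - ((2 * \<mu>) *\<^sub>R (s * (\<P> * D))) - \<mu> *\<^sub>R (s * \<P>)"
    by (simp add: algebra_simps scaleR_2 flip: scaleR_scaleR)
  moreover have "E * D = D + s * (\<P> * D)"
    by (simp add: E_eq distrib_right mult.assoc)
  ultimately show ?thesis
    by (simp only: comm_calC2 C2 DD) (simp add: scaleR_right_distrib)
qed

lemma comm_K_C1_eq_calC2: "comm K C1 = \<nu> *\<^sub>R \<C>\<^sub>2"
  by (simp add: comm_K_C1 scaleR_right_distrib mult.commute)

lemma comm_K_calC2: "comm K \<C>\<^sub>2 = \<mu> *\<^sub>R C1"
  by (simp only: comm_calC2) (simp add: comm_K_C2 comm_mult_right comm_K_D)

lemma comm_H_calC2: "comm H \<C>\<^sub>2 = 2 * K"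
proof -
  have "comm H D = - H" using comm_swap[of H D] comm_D_H by simp
  then show ?thesis by (simp only: comm_calC2) (simp add: comm_H_C2 comm_mult_right algebra_simps)
qed

lemma comm_C1_calC2: "comm C1 \<C>\<^sub>2 = 0"
proof -
  have "comm C1 D = C1" using comm_swap[of C1 D] comm_D_C1 by simp
  then show ?thesis by (simp only: comm_calC2) (simp add: comm_C1_C2 comm_mult_right algebra_simps)
qed

lemma comm_calP_C1: "comm \<P> C1 = - (2 * K)"
proof -
  have "comm C1 \<P>
      = E * (Einv * K + K * Einv) + (1 / 2) *\<^sub>R (s * (E * ((2 * \<mu>) *\<^sub>R (Einv * (Einv * H)))))"
  proof (rule comm_sexpm1_div_nested[OF complete])
    show "comm C1 P = Einv * K + K * Einv" using comm_swap[of C1 P] comm_P_C1 by simp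
    have "H * Einv = Einv * H" using comm_H_Einv by (simp add: comm_eq_0_iff)
    then show "comm (Einv * K + K * Einv) P = (2 * \<mu>) *\<^sub>R (Einv * (Einv * H))"
      by (simp add: comm_add_left comm_mult_left comm_K_P comm_Einv_P mult.assoc scaleR_2
          flip: scaleR_scaleR)
    show "comm P ((2 * \<mu>) *\<^sub>R (Einv * (Einv * H))) = 0"
      using comm_Einv_P comm_H_P comm_swap[of Einv P] comm_swap[of H P]
      by (simp add: comm_scaleR_right comm_mult_right)
  qed
  also have "E * (Einv * K + K * Einv) = K + (K - s * (\<mu> *\<^sub>R (Einv * H)))"
  proof -
    have "comm K E = comm K (1 + s * \<P>)" by (simp only: E_eq[symmetric])
    also have "\<dots> = s * (\<mu> *\<^sub>R H)"
      by (simp add: comm_add_right comm_central_mult[OF complete] comm_K_calP)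
    finally have "E * K = K * E - s * (\<mu> *\<^sub>R H)"
      using comm_eqD[of K E] by (simp add: eq_diff_eq)
    then have "E * (K * Einv) = K - s * (\<mu> *\<^sub>R (H * Einv))"
      by (simp add: mult.assoc[symmetric] left_diff_distrib) (simp add: mult.assoc E_Einv)
    also have "H * Einv = Einv * H" using comm_H_Einv by (simp add: comm_eq_0_iff)
    finally show ?thesis by (simp add: distrib_left mult.assoc[symmetric] E_Einv)
  qed
  also have "(1 / 2) *\<^sub>R (s * (E * ((2 * \<mu>) *\<^sub>R (Einv * (Einv * H))))) = s * (\<mu> *\<^sub>R (Einv * H))"
    by (simp add: mult.assoc[symmetric] E_Einv)
  finally have "comm C1 \<P> = 2 * K" by (simp add: mult_2)
  then show ?thesis using comm_swap[of \<P> C1] by simp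
qed

lemma comm_D_Einv: "comm D Einv = Einv * Einv - Einv"
proof -
  have DQ: "comm D Q = Einv * Q"
    by (rule comm_sexpm1_div[OF complete]) (simp_all add: comm_minus_right comm_D_P comm_Q_P)
  have "comm D Einv = comm D (1 + s * Q)" by (simp only: Einv_eq[symmetric])
  also have "\<dots> = s * (Einv * Q)" by (simp add: comm_add_right comm_central_mult[OF complete] DQ)
  also have "\<dots> = Einv * (s * Q)"
    by (simp only: mult.assoc[symmetric] sadic_complete_central[OF complete, of Einv])
  also have "s * Q = Einv - 1" by (simp add: Einv_eq)
  finally show ?thesis by (simp add: right_diff_distrib)
qed

end

section \<open>The coproduct\<close>

lemma twisted_square_eq:
  fixes a b w :: "'a::ring_1"
  assumes ab: "a * b = b * a" and wb: "w * b = b * w" and aw: "a * w = w * a + w * w - w"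
  shows "(a + b * w) * (a + b * w)
    = a * a + (b * b) * w + 2 * (b * (w * a)) - (b * b + b) * (w - w * w)"
proof -
  have ab': "a * (b * z) = b * (a * z)" for z by (simp only: mult.assoc[symmetric] ab)
  have wb': "w * (b * z) = b * (w * z)" for z by (simp only: mult.assoc[symmetric] wb)
  have aw': "a * (w * z) = w * (a * z) + w * (w * z) - w * z" for z
  proof -
    have "a * (w * z) = (w * a + w * w - w) * z" by (simp only: mult.assoc[symmetric] aw)
    then show ?thesis by (simp add: algebra_simps)
  qed
  show ?thesis by (simp add: algebra_simps ab wb aw ab' wb' aw' mult_2 mult_2_right)
qed

text \<open>\<open>i1 x\<close> and \<open>i2 x\<close> stand for \<open>x \<otimes> 1\<close> and \<open>1 \<otimes> x\<close> in the completed tensor square, whose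
  deformation parameter is \<open>sB\<close>.\<close>

locale deformed_so22_coproduct = deformed_so22 \<mu> \<nu> s H P K D C1 C2
  + i1: real_algebra_hom i1 + i2: real_algebra_hom i2 + cop: real_algebra_hom \<Delta>
  for \<mu> \<nu> :: real and s H P K D C1 C2 :: "'a::real_algebra_1"
    and i1 i2 \<Delta> :: "'a \<Rightarrow> 'b::real_algebra_1" +
  fixes sB :: 'b
  assumes complete_B: "sadic_complete sB"
    and i1_i2_commute: "i1 x * i2 y = i2 y * i1 x"
    and i1_s: "i1 s = sB" and i2_s: "i2 s = sB" and cop_s: "\<Delta> s = sB"
    and cop_P: "\<Delta> P = i2 P + i1 P"
    and cop_D: "\<Delta> D = i2 D + i1 D * i2 (sexp s (- P))"
    and cop_H: "\<Delta> H = i2 H + i1 H * i2 (sexp s P)"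
    and cop_C2: "\<Delta> C2 = i2 C2 + i1 C2 * i2 (sexp s (- P))"
    and cop_K: "\<Delta> K = i2 K + i1 K - sB * (\<mu> *\<^sub>R (i1 D * i2 (sexp s (- P) * H)))"
    and cop_C1: "\<Delta> C1 = i2 C1 + i1 C1 * i2 (sexp s (- P)) - 2 * sB * (i1 D * i2 (sexp s (- P) * K))
      + sB ^ 2 * (\<mu> *\<^sub>R (i1 (D ^ 2 + D) * i2 (sexp s (- P) ^ 2 * H)))"
begin

lemma cop_calP: "\<Delta> \<P> = i2 \<P> + i1 \<P> + sB * (i1 \<P> * i2 \<P>)"
proof -
  have "\<Delta> \<P> = sexpm1_div sB (i1 P + i2 P)"
    by (simp add: cop.hom_sexpm1_div[OF complete complete_B cop_s] cop_P add.commute)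
  also have "\<dots> = sexpm1_div sB (i1 P) + sexp sB (i1 P) * sexpm1_div sB (i2 P)"
    by (rule sexpm1_div_add[OF complete_B i1_i2_commute])
  also have "\<dots> = i1 \<P> + (1 + sB * i1 \<P>) * i2 \<P>"
    by (simp add: sexp_eq_1_plus_sexpm1_div[OF complete_B]
        i1.hom_sexpm1_div[OF complete complete_B i1_s] i2.hom_sexpm1_div[OF complete complete_B i2_s])
  finally show ?thesis by (simp add: distrib_right mult.assoc add_ac)
qed

lemma cop_H_calP: "\<Delta> H = i2 H + i1 H + sB * (i1 H * i2 \<P>)"
proof -
  have "i2 E = 1 + sB * i2 \<P>" by (simp add: E_eq i2.hom_add i2.hom_one i2.hom_mult i2_s)
  moreover have "i1 H * sB = sB * i1 H" by (rule sadic_complete_central[OF complete_B, symmetric])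
  ultimately show ?thesis
    by (simp add: cop_H distrib_left mult.assoc[symmetric])
qed

lemma cop_calC2:
  "\<Delta> \<C>\<^sub>2 = i2 \<C>\<^sub>2 + i1 \<C>\<^sub>2 * i2 Einv + 2 * sB * (\<mu> *\<^sub>R (i1 D * i2 (Einv * D)))
    - sB * (\<mu> *\<^sub>R (i1 (D ^ 2 + D) * i2 (Einv ^ 2 * (s * \<P>))))"
proof -
  define a b w where "a = i2 D" and "b = i1 D" and "w = i2 Einv"
  have ab: "a * b = b * a" and wb: "w * b = b * w"
    unfolding a_def b_def w_def by (simp_all add: i1_i2_commute)
  have aw: "a * w = w * a + w * w - w"
    using comm_eqD[OF comm_D_Einv] unfolding a_def w_def
    by (simp add: add_diff_eq flip: i2.hom_mult i2.hom_add i2.hom_diff)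
  have "s * \<P> = E - 1" by (simp add: E_eq)
  then have "Einv ^ 2 * (s * \<P>) = Einv - Einv * Einv"
    by (simp add: power2_eq_square mult.assoc right_diff_distrib Einv_E)
  then have rhs: "i2 \<C>\<^sub>2 + i1 \<C>\<^sub>2 * i2 Einv + 2 * sB * (\<mu> *\<^sub>R (i1 D * i2 (Einv * D)))
      - sB * (\<mu> *\<^sub>R (i1 (D ^ 2 + D) * i2 (Einv ^ 2 * (s * \<P>))))
    = i2 C2 + sB * (\<mu> *\<^sub>R (a * a)) + (i1 C2 + sB * (\<mu> *\<^sub>R (b * b))) * w
      + 2 * sB * (\<mu> *\<^sub>R (b * (w * a))) - sB * (\<mu> *\<^sub>R ((b * b + b) * (w - w * w)))"
    unfolding a_def b_def w_def
    by (simp add: i1.hom_add i1.hom_mult i1.hom_scaleR i1_s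
        i2.hom_add i2.hom_mult i2.hom_scaleR i2.hom_diff i2_s power2_eq_square)
  have lhs: "\<Delta> \<C>\<^sub>2 = i2 C2 + i1 C2 * w + sB * (\<mu> *\<^sub>R ((a + b * w) * (a + b * w)))"
    unfolding a_def b_def w_def
    by (simp add: cop.hom_add cop.hom_mult cop.hom_scaleR cop.hom_power cop_s cop_C2 cop_D
        power2_eq_square)
  show ?thesis
    unfolding lhs rhs twisted_square_eq[OF ab wb aw]
    by (simp add: algebra_simps mult_2)
qed

end

theorem mainTheorem6:
  fixes \<mu> \<nu> :: real
    and s H P K D C1 C2 :: "'a::real_algebra_1"
    and sB :: "'b::real_algebra_1"
    and i1 i2 :: "'a \<Rightarrow> 'b"
    and \<Delta> :: "'a \<Rightarrow> 'b"
  defines "Em \<equiv> sexp s (- P)"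
    and "calP \<equiv> sexpm1_div s P"
    and "calC2 \<equiv> C2 + s * (\<mu> *\<^sub>R D ^ 2)"
    and "W \<equiv> ring_inv (1 + s * sexpm1_div s P)"
  assumes complA: "sadic_complete s"
    and rKH: "comm K H = \<nu> *\<^sub>R sexpm1_div s P"
    and rKP: "comm K P = \<mu> *\<^sub>R (Em * H)"
    and rHP: "comm H P = 0"
    and rKD: "comm K D = 0"
    and rDH: "comm D H = H"
    and rDC1: "comm D C1 = - C1"
    and rHC1: "comm H C1 = - ((2 * \<nu>) *\<^sub>R D)"
    and rDP: "comm D P = - sexpm1_div s (- P)"
    and rDC2: "comm D C2 = - C2 - s * (\<mu> *\<^sub>R D ^ 2)"
    and rPC2: "comm P C2 = (2 * \<mu>) *\<^sub>R D"
    and rKC1: "comm K C1 = \<nu> *\<^sub>R C2 + s * ((\<mu> * \<nu>) *\<^sub>R D ^ 2)"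
    and rKC2: "comm K C2 = \<mu> *\<^sub>R C1"
    and rPC1: "comm P C1 = - (Em * K) - K * Em"
    and rHC2: "comm H C2 = 2 * K + s * (\<mu> *\<^sub>R (D * H + H * D))"
    and rC1C2: "comm C1 C2 = - (s * (\<mu> *\<^sub>R (D * C1 + C1 * D)))"
    and complB: "sadic_complete sB"
    and i1_hom: "\<And>x y. i1 (x + y) = i1 x + i1 y" "\<And>x y. i1 (x * y) = i1 x * i1 y"
                "i1 1 = 1" "\<And>r x. i1 (r *\<^sub>R x) = r *\<^sub>R i1 x"
    and i2_hom: "\<And>x y. i2 (x + y) = i2 x + i2 y" "\<And>x y. i2 (x * y) = i2 x * i2 y"
                "i2 1 = 1" "\<And>r x. i2 (r *\<^sub>R x) = r *\<^sub>R i2 x"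
    and i12_comm: "\<And>x y. i1 x * i2 y = i2 y * i1 x"
    and i1_s: "i1 s = sB" and i2_s: "i2 s = sB"
    and \<Delta>_hom: "\<And>x y. \<Delta> (x + y) = \<Delta> x + \<Delta> y" "\<And>x y. \<Delta> (x * y) = \<Delta> x * \<Delta> y"
                "\<Delta> 1 = 1" "\<And>r x. \<Delta> (r *\<^sub>R x) = r *\<^sub>R \<Delta> x"
    and \<Delta>_s: "\<Delta> s = sB"
    and \<Delta>P: "\<Delta> P = i2 P + i1 P"
    and \<Delta>D: "\<Delta> D = i2 D + i1 D * i2 Em"
    and \<Delta>H: "\<Delta> H = i2 H + i1 H * i2 (sexp s P)"
    and \<Delta>C2: "\<Delta> C2 = i2 C2 + i1 C2 * i2 Em"
    and \<Delta>K: "\<Delta> K = i2 K + i1 K - sB * (\<mu> *\<^sub>R (i1 D * i2 (Em * H)))"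
    and \<Delta>C1: "\<Delta> C1 = i2 C1 + i1 C1 * i2 Em - 2 * sB * (i1 D * i2 (Em * K))
                  + sB ^ 2 * (\<mu> *\<^sub>R (i1 (D ^ 2 + D) * i2 (Em ^ 2 * H)))"
  shows "comm K H = \<nu> *\<^sub>R calP
       \<and> comm K calP = \<mu> *\<^sub>R H
       \<and> comm H calP = 0
       \<and> comm D H = H
       \<and> comm D C1 = - C1
       \<and> comm H C1 = - ((2 * \<nu>) *\<^sub>R D)
       \<and> comm D calP = calP
       \<and> comm D calC2 = - calC2
       \<and> comm calP calC2 = (2 * \<mu>) *\<^sub>R D
       \<and> comm K C1 = \<nu> *\<^sub>R calC2
       \<and> comm K calC2 = \<mu> *\<^sub>R C1
       \<and> comm K D = 0
       \<and> comm H calC2 = 2 * K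
       \<and> comm calP C1 = - (2 * K)
       \<and> comm C1 calC2 = 0
       \<and> \<Delta> calP = i2 calP + i1 calP + sB * (i1 calP * i2 calP)
       \<and> \<Delta> H = i2 H + i1 H + sB * (i1 H * i2 calP)
       \<and> \<Delta> D = i2 D + i1 D * i2 W
       \<and> \<Delta> K = i2 K + i1 K - sB * (\<mu> *\<^sub>R (i1 D * i2 (W * H)))
       \<and> \<Delta> C1 = i2 C1 + i1 C1 * i2 W - 2 * sB * (i1 D * i2 (W * K))
                  + sB ^ 2 * (\<mu> *\<^sub>R (i1 (D ^ 2 + D) * i2 (W ^ 2 * H)))
       \<and> \<Delta> calC2 = i2 calC2 + i1 calC2 * i2 W + 2 * sB * (\<mu> *\<^sub>R (i1 D * i2 (W * D)))
                  - sB * (\<mu> *\<^sub>R (i1 (D ^ 2 + D) * i2 (W ^ 2 * (s * calP))))"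
proof -
  interpret deformed_so22_coproduct \<mu> \<nu> s H P K D C1 C2 i1 i2 \<Delta> sB
    using complA rKH rKP rHP rKD rDH rDC1 rHC1 rDP rDC2 rPC2 rKC1 rKC2 rPC1 rHC2 rC1C2
      complB i1_hom i2_hom i12_comm i1_s i2_s \<Delta>_hom \<Delta>_s \<Delta>P \<Delta>D \<Delta>H \<Delta>C2 \<Delta>K \<Delta>C1
    unfolding Em_def by unfold_locales auto
  have "W = Em" unfolding W_def Em_def by (rule ring_inv_E)
  then show ?thesis
    unfolding calP_def calC2_def Em_def
    using comm_K_H comm_K_calP comm_H_calP comm_D_H comm_D_C1 comm_H_C1 comm_D_calP comm_D_calC2
      comm_calP_calC2 comm_K_C1_eq_calC2 comm_K_calC2 comm_K_D comm_H_calC2 comm_calP_C1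
      comm_C1_calC2
      cop_calP cop_H_calP cop_D cop_K cop_C1 cop_calC2
    by simp
qed

end
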